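(* Let $H$ be a 0-SYM filter such that every solution $z$ of $H(z)=1$ satisfies $\operatorname{Re}(z)>0$. Then: (A) every pole of $H$ in $\mathbb C$ lies on the imaginary axis $i\mathbb R$; (B) every solution $z$ of $H(z)=-1$ satisfies $\operatorname{Re}(z)<0$.
   Context: A 0-SYM filter is a rational function $H(z)$ with real coefficients satisfying $H(z)^2+H(-z)^2=1$ and $H(z)=H(z^{-1})$. *)

theory Defs
  imports "HOL-Analysis.Analysis" "HOL-Computational_Algebra.Computational_Algebra"
begin

text \<open>A real rational function H = p/q is represented by a pair of real polynomials
  in lowest terms (q nonzero, p and q coprime). It is evaluated at complex points.\<close>

definition rf_defined :: "real poly \<Rightarrow> complex \<Rightarrow> bool" where
  "rf_defined q z \<longleftrightarrow> poly (map_poly complex_of_real q) z \<noteq> 0"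

definition rf_eval :: "real poly \<Rightarrow> real poly \<Rightarrow> complex \<Rightarrow> complex" where
  "rf_eval p q z = poly (map_poly complex_of_real p) z / poly (map_poly complex_of_real q) z"

definition rf_pole :: "real poly \<Rightarrow> complex \<Rightarrow> bool" where
  "rf_pole q z \<longleftrightarrow> poly (map_poly complex_of_real q) z = 0"

definition zero_sym :: "real poly \<Rightarrow> real poly \<Rightarrow> bool" where
  "zero_sym p q \<longleftrightarrow> q \<noteq> 0 \<and> coprime p q \<and>
     (\<forall>z. rf_defined q z \<and> rf_defined q (-z) \<longrightarrow>
          (rf_eval p q z)\<^sup>2 + (rf_eval p q (-z))\<^sup>2 = 1) \<and>
     (\<forall>z. z \<noteq> 0 \<and> rf_defined q z \<and> rf_defined q (inverse z) \<longrightarrow>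
          rf_eval p q z = rf_eval p q (inverse z))"

end

theory Submission
  imports Defs "HOL-Computational_Algebra.Field_as_Ring"
begin

text \<open>Write H = P/Q with coprime P, Q. Clearing denominators in H(z)^2 + H(-z)^2 = 1 and using
  coprimality gives Q(-z) = \<plusminus>Q(z) and P(z)^2 + P(-z)^2 = Q(z)^2, i.e. R_plus * R_minus = Q^2 for the
  coprime polynomials R_plus(z) = P(z) + i P(-z) and R_minus(z) = P(z) - i P(-z). Hence R_plus is a
  constant times g^2 with g = gcd R_plus Q, and g divides T = R_plus - Q, say T = g k. Real coefficients
  give |R_plus(-conj z)| = |R_plus(z)|, hence |g(-conj z)| = |g(z)|. A root of k is either a pole, which
  the gcd property excludes, or a point where H = 1; so all roots of k lie in the open right half-plane,
  and then |k(z)| \<le> |k(-conj z)| for Re z \<ge> 0, strictly if Re z > 0 and k is not constant; the same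
  holds for T. A pole y off the imaginary axis may be chosen with Re y > 0 and R_plus(y) \<noteq> 0 and gives
  |T(y)| = |R_plus(y)| = |T(-conj y)|, while a point x with H(x) = -1 and Re x \<ge> 0 would give
  |T(x)| = 2 |Q(x)| > sqrt 2 |Q(x)| = |T(-conj x)|.\<close>

lemma poly_eq_0_if_zero_off_roots:
  fixes h r :: "'a::{idom,ring_char_0} poly"
  assumes "r \<noteq> 0" and "\<And>z. poly r z \<noteq> 0 \<Longrightarrow> poly h z = 0"
  shows "h = 0"
proof -
  have "h * r = 0"
    using assms(2) poly_all_0_iff_0[of "h * r"] by auto
  with assms(1) show ?thesis by simp
qed

lemma map_poly_of_real_add:
  "map_poly (of_real :: real \<Rightarrow> 'a::real_algebra_1) (a + b) = map_poly of_real a + map_poly of_real b"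
  by (rule poly_eqI) (simp add: coeff_map_poly)

lemma map_poly_of_real_mult:
  "map_poly (of_real :: real \<Rightarrow> 'a::{real_algebra_1,comm_ring_1}) (a * b) =
     map_poly of_real a * map_poly of_real b"
  by (rule poly_eqI) (simp add: coeff_map_poly coeff_mult)

lemma cnj_poly_of_real_poly:
  "cnj (poly (map_poly complex_of_real f) z) = poly (map_poly complex_of_real f) (cnj z)"
  by (rule poly_cnj_real) (simp add: coeff_map_poly)

lemma poly_of_real_poly_nonzero_if_coprime:
  fixes p q :: "real poly" and z :: "'a::{real_algebra_1,comm_ring_1}"
  assumes "coprime p q" and "poly (map_poly of_real p) z = 0"
  shows "poly (map_poly of_real q) z \<noteq> 0"
proof -
  obtain u v where "u * p + v * q = 1"
    using assms(1) bezout_coefficients_fst_snd[of p q] by (auto simp: coprime_iff_gcd_eq_1)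
  then have "poly (map_poly of_real (u * p + v * q)) z = (1 :: 'a)"
    by simp
  then have "poly (map_poly of_real u) z * poly (map_poly of_real p) z +
             poly (map_poly of_real v) z * poly (map_poly of_real q) z = (1 :: 'a)"
    by (simp add: map_poly_of_real_add map_poly_of_real_mult)
  with assms(2) show ?thesis by auto
qed

lemma coprime_if_no_common_root:
  fixes a b :: "complex poly"
  assumes "\<And>z. poly a z = 0 \<Longrightarrow> poly b z \<noteq> 0"
  shows "coprime a b"
proof -
  have "gcd a b \<noteq> 0"
    using assms[of 0] by auto
  moreover have "degree (gcd a b) = 0"
  proof (rule ccontr)
    assume "degree (gcd a b) \<noteq> 0"
    then obtain z where "poly (gcd a b) z = 0"
      by (metis constant_degree fundamental_theorem_of_algebra)
    then have "poly a z = 0" and "poly b z = 0"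
      by (meson dvd_trans gcd_dvd1 gcd_dvd2 poly_eq_0_iff_dvd)+
    with assms show False by blast
  qed
  ultimately have "is_unit (gcd a b)"
    using is_unit_iff_degree by blast
  then show ?thesis
    by (simp only: is_unit_gcd)
qed

lemma normalize_eq_gcd_square_if_coprime:
  fixes a b c :: "'a::semiring_gcd_mult_normalize"
  assumes "coprime a b" and "a * b = c ^ 2"
  shows "normalize a = gcd a c ^ 2"
proof -
  have "gcd a c ^ 2 = gcd (a ^ 2) (c ^ 2)"
    by simp
  also have "\<dots> = gcd (a * a) (a * b)"
    by (simp add: assms(2) power2_eq_square)
  also have "\<dots> = normalize (a * gcd a b)"
    by (rule gcd_mult_left)
  also have "\<dots> = normalize a"
    using assms(1) by (simp add: coprime_iff_gcd_eq_1)
  finally show ?thesis by simp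
qed

definition mirror :: "'a::comm_ring_1 poly \<Rightarrow> 'a poly" where
  "mirror f = pcompose f [:0, -1:]"

lemma poly_mirror [simp]: "poly (mirror f) z = poly f (- z)"
  by (simp add: mirror_def poly_pcompose)

lemma coeff_mirror: "coeff (mirror f) n = (- 1) ^ n * coeff f n"
  unfolding mirror_def by (rule coeff_pcompose_linear)

lemma degree_mirror [simp]: "degree (mirror (f :: 'a::idom poly)) = degree f"
  by (simp add: mirror_def degree_pcompose)

lemma mirror_mirror [simp]: "mirror (mirror f) = f"
  by (rule poly_eqI) (simp add: coeff_mirror flip: power_mult_distrib)

lemma mirror_smult: "mirror (smult c f) = smult c (mirror f)"
  by (simp add: mirror_def pcompose_smult)

lemma mirror_eq_0_iff [simp]: "mirror f = 0 \<longleftrightarrow> f = 0"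
  by (metis mirror_mirror pcompose_0 mirror_def)

lemma mirror_eq_sign_if_dvd:
  fixes f :: "'a::field poly"
  assumes "f \<noteq> 0" and "f dvd mirror f"
  obtains c where "c = 1 \<or> c = -1" and "mirror f = smult c f"
proof -
  obtain w where w: "mirror f = f * w"
    using assms(2) by (elim dvdE)
  with assms(1) have "w \<noteq> 0" by auto
  with assms(1) have "degree f = degree f + degree w"
    by (metis w degree_mirror degree_mult_eq)
  then obtain c where "w = [:c:]"
    by (metis add_cancel_right_right degree_eq_zeroE)
  then have c: "mirror f = smult c f"
    using w by simp
  then have "smult (c * c) f = f"
    by (metis mirror_mirror mirror_smult smult_smult)
  then have "smult (c * c - 1) f = 0"
    by (simp add: smult_diff_left)
  with assms(1) have "c * c = 1"
    by simp
  with c that show ?thesis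
    by (simp add: square_eq_1_iff)
qed

lemma norm_reflect_diff_square:
  fixes x r :: complex
  shows "norm (- cnj x - r) ^ 2 = norm (x - r) ^ 2 + 4 * Re x * Re r"
  unfolding cmod_power2 by (simp add: power2_eq_square algebra_simps)

lemma norm_diff_le_reflect:
  fixes x r :: complex
  assumes "Re r > 0" and "Re x \<ge> 0"
  shows "norm (x - r) \<le> norm (- cnj x - r)"
proof (rule power2_le_imp_le)
  have "0 \<le> 4 * Re x * Re r"
    using assms by simp
  then show "norm (x - r) ^ 2 \<le> norm (- cnj x - r) ^ 2"
    using norm_reflect_diff_square[of x r] by linarith
qed simp

lemma norm_diff_less_reflect:
  fixes x r :: complex
  assumes "Re r > 0" and "Re x > 0"
  shows "norm (x - r) < norm (- cnj x - r)"
proof (rule power_less_imp_less_base)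
  have "0 < 4 * Re x * Re r"
    using assms by simp
  then show "norm (x - r) ^ 2 < norm (- cnj x - r) ^ 2"
    using norm_reflect_diff_square[of x r] by linarith
qed simp

lemma norm_poly_le_reflect:
  fixes k :: "complex poly"
  assumes "\<And>z. poly k z = 0 \<Longrightarrow> Re z > 0" and "Re x \<ge> 0"
  shows "norm (poly k x) \<le> norm (poly k (- cnj x))"
  using assms(1)
proof (induction "degree k" arbitrary: k)
  case 0
  then obtain c where "k = [:c:]"
    by (metis degree_eq_zeroE)
  then show ?case
    by simp
next
  case (Suc n)
  then have "\<not> constant (poly k)"
    by (simp add: constant_degree)
  then obtain r where r: "poly k r = 0"
    using fundamental_theorem_of_algebra by blast
  then obtain k' where k: "k = [:-r, 1:] * k'"
    by (metis dvdE poly_eq_0_iff_dvd)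
  with Suc.hyps(2) have "k' \<noteq> 0"
    by auto
  with Suc.hyps(2) have "degree k' = n"
    unfolding k by (subst (asm) degree_mult_eq) auto
  moreover have "\<And>z. poly k' z = 0 \<Longrightarrow> Re z > 0"
    using Suc.prems k by simp
  ultimately have IH: "norm (poly k' x) \<le> norm (poly k' (- cnj x))"
    by (rule Suc.hyps(1)[OF sym])
  have pk: "poly k z = (z - r) * poly k' z" for z
    by (simp add: k algebra_simps)
  have "norm (poly k x) = norm (x - r) * norm (poly k' x)"
    by (simp add: pk norm_mult)
  also have "\<dots> \<le> norm (- cnj x - r) * norm (poly k' (- cnj x))"
    using Suc.prems r assms(2) IH by (intro mult_mono norm_diff_le_reflect) auto
  also have "\<dots> = norm (poly k (- cnj x))"
    by (simp add: pk norm_mult)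
  finally show ?case .
qed

lemma norm_poly_less_reflect:
  fixes k :: "complex poly"
  assumes roots: "\<And>z. poly k z = 0 \<Longrightarrow> Re z > 0" and "Re x > 0" and "degree k > 0"
  shows "norm (poly k x) < norm (poly k (- cnj x))"
proof -
  have "\<not> constant (poly k)"
    using assms(3) by (simp add: constant_degree)
  then obtain r where r: "poly k r = 0"
    using fundamental_theorem_of_algebra by blast
  then obtain k' where k: "k = [:-r, 1:] * k'"
    by (metis dvdE poly_eq_0_iff_dvd)
  have roots': "\<And>z. poly k' z = 0 \<Longrightarrow> Re z > 0"
    using roots k by simp
  have pk: "poly k z = (z - r) * poly k' z" for z
    by (simp add: k algebra_simps)
  have "norm (poly k x) = norm (x - r) * norm (poly k' x)"
    by (simp add: pk norm_mult)
  also have "\<dots> \<le> norm (x - r) * norm (poly k' (- cnj x))"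
    using norm_poly_le_reflect[OF roots'] assms(2) by (simp add: mult_left_mono)
  also have "\<dots> < norm (- cnj x - r) * norm (poly k' (- cnj x))"
  proof (rule mult_strict_right_mono)
    show "norm (x - r) < norm (- cnj x - r)"
      using roots r assms(2) by (intro norm_diff_less_reflect) auto
    show "norm (poly k' (- cnj x)) > 0"
      using roots'[of "- cnj x"] assms(2) by auto
  qed
  also have "\<dots> = norm (poly k (- cnj x))"
    by (simp add: pk norm_mult)
  finally show ?thesis .
qed

locale zero_sym_filter =
  fixes p q :: "real poly"
  assumes zero_sym: "zero_sym p q"
begin

abbreviation P :: "complex poly" where "P \<equiv> map_poly complex_of_real p"
abbreviation Q :: "complex poly" where "Q \<equiv> map_poly complex_of_real q"

lemma degree_Q: "degree Q = degree q"
  by (simp add: degree_map_poly)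

lemma Q_nonzero: "Q \<noteq> 0"
  using zero_sym by (simp add: zero_sym_def map_poly_eq_0_iff)

lemma poly_Q_nonzero_if_root_of_P: "poly P z = 0 \<Longrightarrow> poly Q z \<noteq> 0"
  using zero_sym poly_of_real_poly_nonzero_if_coprime by (auto simp: zero_sym_def)

lemma coprime_Q_P: "coprime Q P"
  using poly_Q_nonzero_if_root_of_P by (auto intro: coprime_if_no_common_root)

lemma functional_equation:
  assumes "poly Q z \<noteq> 0" and "poly Q (- z) \<noteq> 0"
  shows "(poly P z / poly Q z)\<^sup>2 + (poly P (- z) / poly Q (- z))\<^sup>2 = 1"
  using zero_sym assms unfolding zero_sym_def rf_defined_def rf_eval_def by blast

lemma cleared_identity: "P\<^sup>2 * (mirror Q)\<^sup>2 + (mirror P)\<^sup>2 * Q\<^sup>2 = Q\<^sup>2 * (mirror Q)\<^sup>2"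
proof -
  have "P\<^sup>2 * (mirror Q)\<^sup>2 + (mirror P)\<^sup>2 * Q\<^sup>2 - Q\<^sup>2 * (mirror Q)\<^sup>2 = 0"
  proof (rule poly_eq_0_if_zero_off_roots)
    show "Q * mirror Q \<noteq> 0"
      using Q_nonzero by simp
    fix z
    assume "poly (Q * mirror Q) z \<noteq> 0"
    then have nonzero: "poly Q z \<noteq> 0" "poly Q (- z) \<noteq> 0"
      by auto
    define a b c d where abcd: "a = poly P z" "b = poly Q z" "c = poly P (- z)" "d = poly Q (- z)"
    have sum: "(a / b)\<^sup>2 + (c / d)\<^sup>2 = 1" and "b \<noteq> 0" and "d \<noteq> 0"
      using functional_equation[OF nonzero] nonzero by (simp_all add: abcd)
    have "a\<^sup>2 * d\<^sup>2 + c\<^sup>2 * b\<^sup>2 = ((a / b)\<^sup>2 + (c / d)\<^sup>2) * (b\<^sup>2 * d\<^sup>2)"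
      using \<open>b \<noteq> 0\<close> \<open>d \<noteq> 0\<close> by (simp add: power_divide distrib_right)
    also have "\<dots> = b\<^sup>2 * d\<^sup>2"
      by (simp only: sum mult_1_left)
    finally show "poly (P\<^sup>2 * (mirror Q)\<^sup>2 + (mirror P)\<^sup>2 * Q\<^sup>2 - Q\<^sup>2 * (mirror Q)\<^sup>2) z = 0"
      by (simp add: abcd)
  qed
  then show ?thesis
    by simp
qed

lemma mirror_Q:
  obtains c where "c = 1 \<or> c = -1" and "mirror Q = smult c Q"
proof (rule mirror_eq_sign_if_dvd[OF Q_nonzero])
  have "P\<^sup>2 * (mirror Q)\<^sup>2 = Q\<^sup>2 * ((mirror Q)\<^sup>2 - (mirror P)\<^sup>2)"
    using cleared_identity by (simp add: algebra_simps)
  then have "Q\<^sup>2 dvd P\<^sup>2 * (mirror Q)\<^sup>2"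
    by simp
  with coprime_Q_P have "Q\<^sup>2 dvd (mirror Q)\<^sup>2"
    by (simp add: coprime_dvd_mult_right_iff)
  then show "Q dvd mirror Q"
    by simp
qed

lemma sum_of_squares: "P\<^sup>2 + (mirror P)\<^sup>2 = Q\<^sup>2"
proof -
  obtain c where "c = 1 \<or> c = -1" and c: "mirror Q = smult c Q"
    by (rule mirror_Q)
  then have "(mirror Q)\<^sup>2 = Q\<^sup>2"
    by auto
  with cleared_identity have "(P\<^sup>2 + (mirror P)\<^sup>2) * Q\<^sup>2 = Q\<^sup>2 * Q\<^sup>2"
    by (simp add: algebra_simps)
  moreover have "Q\<^sup>2 \<noteq> 0"
    using Q_nonzero by simp
  ultimately show ?thesis
    by (metis mult_right_cancel)
qed

lemma poly_Q_reflect_roots: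
  assumes "poly Q z = 0"
  shows "poly Q (- z) = 0" and "poly Q (cnj z) = 0"
proof -
  obtain c where "mirror Q = smult c Q"
    by (rule mirror_Q)
  from arg_cong[OF this, of "\<lambda>f. poly f z"] assms show "poly Q (- z) = 0"
    by simp
  show "poly Q (cnj z) = 0"
    using cnj_poly_of_real_poly[of q z] assms by simp
qed

definition R_plus :: "complex poly" where "R_plus = P + smult \<i> (mirror P)"
definition R_minus :: "complex poly" where "R_minus = P - smult \<i> (mirror P)"

lemma R_plus_times_R_minus: "R_plus * R_minus = Q\<^sup>2"
  using sum_of_squares by (simp add: R_plus_def R_minus_def algebra_simps power2_eq_square)

lemma poly_R_plus_plus_R_minus: "poly R_plus z + poly R_minus z = 2 * poly P z"
  by (simp add: R_plus_def R_minus_def)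

lemma coprime_R_plus_R_minus: "coprime R_plus R_minus"
proof (rule coprime_if_no_common_root)
  fix z
  assume plus: "poly R_plus z = 0"
  show "poly R_minus z \<noteq> 0"
  proof
    assume "poly R_minus z = 0"
    with plus have "poly P z = 0" and "poly P (- z) = 0"
      by (simp_all add: R_plus_def R_minus_def)
    then have "poly Q z = 0"
      using arg_cong[OF sum_of_squares, of "\<lambda>f. poly f z"] by simp
    with \<open>poly P z = 0\<close> show False
      using poly_Q_nonzero_if_root_of_P by blast
  qed
qed

lemma poly_R_minus: "poly R_minus z = cnj (poly R_plus (cnj z))"
  by (simp add: R_plus_def R_minus_def cnj_poly_of_real_poly)

lemma cnj_poly_R_plus_reflect: "cnj (poly R_plus (- cnj z)) = - \<i> * poly R_plus z"
  by (simp add: R_plus_def cnj_poly_of_real_poly algebra_simps)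

lemma norm_poly_R_plus_reflect: "norm (poly R_plus (- cnj z)) = norm (poly R_plus z)"
  using arg_cong[OF cnj_poly_R_plus_reflect[of z], of norm] by (simp add: norm_mult)

lemma obtain_right_pole_off_roots_of_R_plus:
  assumes "poly Q z = 0" and "Re z \<noteq> 0"
  obtains y where "Re y > 0" and "poly Q y = 0" and "poly R_plus y \<noteq> 0"
proof -
  obtain y0 where y0: "Re y0 > 0" "poly Q y0 = 0"
  proof (cases "Re z > 0")
    case True
    with assms that show ?thesis by blast
  next
    case False
    with assms(2) show ?thesis
      using that[of "- z"] poly_Q_reflect_roots(1)[OF assms(1)] by simp
  qed
  have R_plus_y0: "poly R_plus y0 \<noteq> 0 \<or> poly R_plus (cnj y0) \<noteq> 0"
  proof (rule ccontr)
    assume "\<not> ?thesis"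
    then have "poly R_plus y0 = 0" and "poly R_minus y0 = 0"
      by (simp_all add: poly_R_minus)
    then have "poly P y0 = 0"
      using poly_R_plus_plus_R_minus[of y0] by simp
    with y0(2) show False
      using poly_Q_nonzero_if_root_of_P by blast
  qed
  show ?thesis
  proof (cases "poly R_plus y0 = 0")
    case False
    with y0 that show ?thesis by blast
  next
    case True
    with R_plus_y0 y0 show ?thesis
      using that[of "cnj y0"] poly_Q_reflect_roots(2)[OF y0(2)] by simp
  qed
qed

definition g :: "complex poly" where "g = gcd R_plus Q"

lemma R_plus_eq_smult_g_square: "R_plus = smult (lead_coeff R_plus) (g\<^sup>2)"
proof -
  have "normalize R_plus = g\<^sup>2"
    unfolding g_def using coprime_R_plus_R_minus R_plus_times_R_minus
    by (rule normalize_eq_gcd_square_if_coprime)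
  then show ?thesis
    using unit_factor_mult_normalize[of R_plus] by (simp add: unit_factor_poly_def)
qed

lemma R_plus_nonzero: "R_plus \<noteq> 0"
  using R_plus_times_R_minus Q_nonzero by auto

lemma g_nonzero: "g \<noteq> 0"
  using R_plus_nonzero by (simp add: g_def)

lemma poly_R_plus: "poly R_plus z = lead_coeff R_plus * poly g z ^ 2"
  by (subst R_plus_eq_smult_g_square) simp

lemma norm_poly_g_reflect: "norm (poly g (- cnj z)) = norm (poly g z)"
proof -
  have "norm (lead_coeff R_plus) * norm (poly g (- cnj z)) ^ 2 =
        norm (lead_coeff R_plus) * norm (poly g z) ^ 2"
    using norm_poly_R_plus_reflect[of z] by (simp only: poly_R_plus norm_mult norm_power)
  with R_plus_nonzero show ?thesis
    by (simp add: power2_eq_iff_nonneg)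
qed

definition T :: "complex poly" where "T = R_plus - Q"
definition k :: "complex poly" where "k = T div g"

lemma T_eq_g_times_k: "T = g * k"
proof -
  have "g dvd T"
    unfolding T_def g_def by (intro dvd_diff gcd_dvd1 gcd_dvd2)
  then show ?thesis
    unfolding k_def by (rule dvd_mult_div_cancel[symmetric])
qed

lemma degree_k_pos:
  assumes "degree Q > 0"
  shows "degree k > 0"
proof -
  define n where "n = degree Q"
  have "coeff T n = complex_of_real (coeff p n - coeff q n) + \<i> * complex_of_real ((-1) ^ n * coeff p n)"
    by (simp add: T_def R_plus_def coeff_mirror coeff_map_poly algebra_simps)
  moreover have "coeff q n \<noteq> 0"
    using zero_sym by (simp add: n_def degree_Q coeff_map_poly zero_sym_def)
  ultimately have "coeff T n \<noteq> 0"
    by (auto simp: complex_eq_iff)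
  then have "n \<le> degree T" and "T \<noteq> 0"
    by (auto intro: le_degree)
  have "degree R_plus \<le> degree T"
  proof (cases "degree R_plus \<le> n")
    case False
    then have "degree (R_plus + - Q) = degree R_plus"
      by (intro degree_add_eq_left) (simp add: n_def)
    then show ?thesis
      by (simp add: T_def)
  qed (use \<open>n \<le> degree T\<close> in simp)
  moreover have "degree R_plus = 2 * degree g"
    using R_plus_nonzero g_nonzero
    by (subst R_plus_eq_smult_g_square) (simp add: degree_power_eq)
  moreover have "degree T = degree g + degree k"
    using \<open>T \<noteq> 0\<close> g_nonzero unfolding T_eq_g_times_k by (intro degree_mult_eq) auto
  ultimately show ?thesis
    using \<open>n \<le> degree T\<close> assms unfolding n_def by linarith
qed

end

locale zero_sym_filter_ones_right = zero_sym_filter +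
  assumes ones_right: "\<forall>z. rf_defined q z \<and> rf_eval p q z = 1 \<longrightarrow> Re z > 0"
begin

lemma roots_k_right_half_plane:
  assumes "poly k z = 0"
  shows "Re z > 0"
proof -
  have "poly T z = 0"
    using assms by (simp add: T_eq_g_times_k)
  then have R_plus_z: "poly R_plus z = poly Q z"
    by (simp add: T_def)
  show ?thesis
  proof (cases "poly Q z = 0")
    case False
    with R_plus_z have "poly R_minus z = poly Q z"
      using arg_cong[OF R_plus_times_R_minus, of "\<lambda>f. poly f z"] False
      by (simp add: power2_eq_square)
    with R_plus_z have "poly P z = poly Q z"
      using poly_R_plus_plus_R_minus[of z] by simp
    with False ones_right show ?thesis
      by (simp add: rf_defined_def rf_eval_def)
  next
    case True
    \<comment> \<open>then (X - z) g would be a common divisor of R_plus and Q\<close>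
    define d where "d = [:-z, 1:]"
    from R_plus_z True have "poly R_plus z = 0"
      by simp
    then have "poly g z = 0"
      using R_plus_nonzero by (simp add: poly_R_plus)
    then have "d dvd g"
      by (simp add: d_def poly_eq_0_iff_dvd)
    then have "d * g dvd g * g"
      by (simp add: mult_dvd_mono)
    then have dg_R_plus: "d * g dvd R_plus"
      by (metis R_plus_eq_smult_g_square dvd_smult power2_eq_square)
    have "d dvd k"
      using assms by (simp add: d_def poly_eq_0_iff_dvd)
    then have dg_T: "d * g dvd T"
      unfolding T_eq_g_times_k mult.commute[of d g] by (rule mult_dvd_mono[OF dvd_refl])
    from dg_R_plus dg_T have "d * g dvd R_plus - T"
      by (rule dvd_diff)
    then have "d * g dvd Q"
      by (simp add: T_def)
    with dg_R_plus have "d * g dvd g"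
      unfolding g_def by (rule gcd_greatest)
    then have "degree (d * g) \<le> degree g"
      using g_nonzero by (rule dvd_imp_degree_le)
    moreover have "degree (d * g) = degree g + 1"
      using g_nonzero by (subst degree_mult_eq) (auto simp: d_def)
    ultimately show ?thesis
      by simp
  qed
qed

lemma norm_poly_T_le_reflect:
  assumes "Re x \<ge> 0"
  shows "norm (poly T x) \<le> norm (poly T (- cnj x))"
proof -
  have "norm (poly T x) = norm (poly g x) * norm (poly k x)"
    by (simp add: T_eq_g_times_k norm_mult)
  also have "\<dots> \<le> norm (poly g x) * norm (poly k (- cnj x))"
    using norm_poly_le_reflect[of k x] roots_k_right_half_plane assms by (simp add: mult_left_mono)
  also have "\<dots> = norm (poly T (- cnj x))"
    by (simp add: T_eq_g_times_k norm_mult norm_poly_g_reflect)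
  finally show ?thesis .
qed

lemma norm_poly_T_less_reflect:
  assumes "Re x > 0" and "degree Q > 0" and "poly g x \<noteq> 0"
  shows "norm (poly T x) < norm (poly T (- cnj x))"
proof -
  have "norm (poly T x) = norm (poly g x) * norm (poly k x)"
    by (simp add: T_eq_g_times_k norm_mult)
  also have "\<dots> < norm (poly g x) * norm (poly k (- cnj x))"
    using norm_poly_less_reflect[of k x] roots_k_right_half_plane assms degree_k_pos by simp
  also have "\<dots> = norm (poly T (- cnj x))"
    by (simp add: T_eq_g_times_k norm_mult norm_poly_g_reflect)
  finally show ?thesis .
qed

lemma poles_on_imaginary_axis:
  assumes "poly Q z = 0"
  shows "Re z = 0"
proof (rule ccontr)
  assume "Re z \<noteq> 0"
  with assms obtain y where y: "Re y > 0" "poly Q y = 0" "poly R_plus y \<noteq> 0"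
    by (rule obtain_right_pole_off_roots_of_R_plus)
  have "degree Q > 0"
  proof (rule ccontr)
    assume "\<not> degree Q > 0"
    then obtain c where "Q = [:c:]"
      by (metis degree_eq_zeroE neq0_conv)
    with Q_nonzero y(2) show False
      by simp
  qed
  moreover have "poly g y \<noteq> 0"
    using y(3) by (auto simp: poly_R_plus)
  ultimately have "norm (poly T y) < norm (poly T (- cnj y))"
    using y(1) by (intro norm_poly_T_less_reflect)
  moreover have "poly Q (- cnj y) = 0"
    using poly_Q_reflect_roots[OF y(2)] poly_Q_reflect_roots(1) by blast
  then have "norm (poly T (- cnj y)) = norm (poly R_plus y)"
    by (simp add: T_def norm_poly_R_plus_reflect)
  moreover have "poly T y = poly R_plus y"
    using y(2) by (simp add: T_def)
  ultimately show False
    by simp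
qed

lemma Re_neg_if_eval_minus_one:
  assumes "poly Q z \<noteq> 0" and "poly P z = - poly Q z"
  shows "Re z < 0"
proof (rule ccontr)
  assume "\<not> Re z < 0"
  then have "norm (poly T z) \<le> norm (poly T (- cnj z))"
    by (intro norm_poly_T_le_reflect) simp
  obtain c where c: "c = 1 \<or> c = -1" "mirror Q = smult c Q"
    by (rule mirror_Q)
  have "(poly P (- z))\<^sup>2 = 0"
    using arg_cong[OF sum_of_squares, of "\<lambda>f. poly f z"] assms(2) by simp
  then have R_plus_z: "poly R_plus z = - poly Q z"
    using assms(2) by (simp add: R_plus_def)
  then have "norm (poly T z) = 2 * norm (poly Q z)"
    by (simp add: T_def norm_mult)
  have "cnj (poly R_plus (- cnj z)) = \<i> * poly Q z"
    using cnj_poly_R_plus_reflect[of z] R_plus_z by simp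
  from arg_cong[OF this, of cnj] have "poly R_plus (- cnj z) = - \<i> * cnj (poly Q z)"
    by simp
  moreover have "poly Q (- cnj z) = c * cnj (poly Q z)"
    using arg_cong[OF c(2), of "\<lambda>f. poly f (cnj z)"] by (simp add: cnj_poly_of_real_poly)
  ultimately have "poly T (- cnj z) = (- \<i> - c) * cnj (poly Q z)"
    by (simp add: T_def algebra_simps)
  then have "norm (poly T (- cnj z)) = norm (- \<i> - c) * norm (poly Q z)"
    by (simp add: norm_mult)
  also have "norm (- \<i> - c) = sqrt 2"
    using c(1) by (auto simp: cmod_def)
  finally have "2 * norm (poly Q z) \<le> sqrt 2 * norm (poly Q z)"
    using \<open>norm (poly T z) \<le> norm (poly T (- cnj z))\<close> \<open>norm (poly T z) = 2 * norm (poly Q z)\<close> by simp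
  with assms(1) have "2 \<le> sqrt (2 :: real)"
    by simp
  moreover have "sqrt 2 < (2 :: real)"
    by (rule real_less_lsqrt) auto
  ultimately show False
    by simp
qed

end

theorem theorem3:
  fixes p q :: "real poly"
  assumes "zero_sym p q"
    and "\<forall>z. rf_defined q z \<and> rf_eval p q z = 1 \<longrightarrow> Re z > 0"
  shows "(\<forall>z. rf_pole q z \<longrightarrow> Re z = 0) \<and>
         (\<forall>z. rf_defined q z \<and> rf_eval p q z = -1 \<longrightarrow> Re z < 0)"
proof -
  interpret zero_sym_filter_ones_right p q
    using assms by unfold_locales
  show ?thesis
  proof (intro conjI allI impI)
    fix z
    assume "rf_pole q z"
    then show "Re z = 0"
      by (intro poles_on_imaginary_axis) (simp add: rf_pole_def)
  next
    fix z
    assume "rf_defined q z \<and> rf_eval p q z = -1"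
    then show "Re z < 0"
      by (intro Re_neg_if_eval_minus_one) (auto simp: rf_defined_def rf_eval_def divide_eq_minus_1_iff)
  qed
qed

end
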